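(* For any finite multiset $C$ of vectors in $\mathbb{Z}^d$, a vector $c\in\mathbb{R}^d$ minimizing $\sum_{x\in C}\operatorname{dist}_\infty(x,c)$ can always be chosen from $\frac{1}{2}\mathbb{Z}^d$, i.e., with every coordinate an integer or a half-integer.
   Context: $\operatorname{dist}_\infty(x,y)=\max_{1\le i\le d}|x[i]-y[i]|$. *)

theory Defs
  imports "HOL-Analysis.Analysis" "HOL-Library.Multiset"
begin

definition dist_inf :: "real^'d \<Rightarrow> real^'d \<Rightarrow> real" where
  "dist_inf x y = Max (range (\<lambda>i. \<bar>x $ i - y $ i\<bar>))"

definition int_vec :: "int^'d \<Rightarrow> real^'d" where
  "int_vec x = (\<chi> i. real_of_int (x $ i))"

definition inf_cost :: "(int^'d) multiset \<Rightarrow> real^'d \<Rightarrow> real" where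
  "inf_cost C c = (\<Sum>x\<in>#C. dist_inf (int_vec x) c)"

end

theory Submission
  imports Defs
begin

text \<open>Round a centre \<open>c\<close> coordinatewise to a half-integral point with a threshold
  \<open>0 < th \<le> 1/2\<close>: a fractional part \<open>f\<close> becomes 0 if \<open>f < th\<close>, 1/2 if \<open>th \<le> f \<le> 1 - th\<close>
  and 1 otherwise. For integer points this rounding commutes with \<open>\<bar>x $ i - c $ i\<bar>\<close> and, being
  monotone, with the maximum, so each distance \<open>dist_inf (int_vec x) c\<close> is rounded by the same
  rule. For \<open>th\<close> uniform on \<open>(0, 1/2]\<close> this rounding of a real number is unbiased, so some
  threshold does not increase the total cost. Twice the cost of a half-integral centre is a natural
  number, hence a cheapest half-integral centre exists, and it is a global minimiser.\<close>

text \<open>The weights \<open>gap_below T t\<close> are the lengths of the intervals into which the points of \<open>T\<close>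
  cut \<open>(0, max T]\<close>; averaging with them replaces integration over the threshold.\<close>

definition gap_below :: "real set \<Rightarrow> real \<Rightarrow> real" where
  "gap_below T t = t - Max (insert 0 {s\<in>T. s < t})"

lemma gap_below_pos:
  assumes "finite T" "t > 0"
  shows "gap_below T t > 0"
  using assms by (simp add: gap_below_def Max_less_iff)

lemma gap_below_insert_greater:
  assumes "\<forall>s\<in>T. s < m" "t \<in> T"
  shows "gap_below (insert m T) t = gap_below T t"
proof -
  have "{s\<in>insert m T. s < t} = {s\<in>T. s < t}" using assms by auto
  then show ?thesis by (simp add: gap_below_def)
qed

lemma sum_gap_below_atMost:
  assumes "finite T" "T \<subseteq> {0<..}" "u \<in> insert 0 T"
  shows "(\<Sum>t\<in>{t\<in>T. t \<le> u}. gap_below T t) = u"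
  using assms
proof (induction T arbitrary: u rule: finite_linorder_max_induct)
  case empty
  then show ?case by simp
next
  case (insert m T)
  have T_pos: "T \<subseteq> {0<..}" and "m > 0" using insert.prems by auto
  have IH_sum: "(\<Sum>t\<in>{t\<in>T. t \<le> v}. gap_below (insert m T) t) = v" if "v \<in> insert 0 T" for v
  proof -
    have "(\<Sum>t\<in>{t\<in>T. t \<le> v}. gap_below (insert m T) t) = (\<Sum>t\<in>{t\<in>T. t \<le> v}. gap_below T t)"
      using gap_below_insert_greater[OF insert.hyps(2)] by (intro sum.cong) auto
    also have "\<dots> = v" by (rule insert.IH[OF T_pos that])
    finally show ?thesis .
  qed
  show ?case
  proof (cases "u = m")
    case True
    define p where "p = Max (insert 0 T)"
    have p: "p \<in> insert 0 T" unfolding p_def using insert.hyps(1) by (intro Max_in) auto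
    have below_p: "{t\<in>T. t \<le> p} = T" using insert.hyps(1) by (auto simp: p_def)
    have "{s\<in>insert m T. s < m} = T" using insert.hyps(2) by auto
    then have gap_m: "gap_below (insert m T) m = m - p" by (simp add: gap_below_def p_def)
    have "{t\<in>insert m T. t \<le> u} = insert m T" using True insert.hyps(2) by auto
    then show ?thesis using IH_sum[OF p] below_p gap_m insert.hyps True by auto
  next
    case False
    then have "u \<in> insert 0 T" "u < m" using insert.prems insert.hyps \<open>m > 0\<close> by auto
    then have "{t\<in>insert m T. t \<le> u} = {t\<in>T. t \<le> u}" by auto
    then show ?thesis using IH_sum[OF \<open>u \<in> insert 0 T\<close>] by simp
  qed
qed

definition half_round_frac :: "real \<Rightarrow> real \<Rightarrow> real" where
  "half_round_frac th s = (if s < th then 0 else if s \<le> 1 - th then 1/2 else 1)"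

definition half_round :: "real \<Rightarrow> real \<Rightarrow> real" where
  "half_round th c = of_int \<lfloor>c\<rfloor> + half_round_frac th (frac c)"

lemma half_round_add_of_int: "half_round th (c + of_int n) = half_round th c + of_int n"
  by (simp add: half_round_def flip: floor_add_int)

lemma half_round_of_int:
  assumes "0 < th"
  shows "half_round th (of_int n) = of_int n"
  using assms by (simp add: half_round_def half_round_frac_def)

lemma half_round_uminus:
  assumes "0 < th" "th \<le> 1/2"
  shows "half_round th (- c) = - half_round th c"
proof (cases "c \<in> \<int>")
  case True
  then show ?thesis using half_round_of_int[OF assms(1)] by (auto elim: Ints_cases simp flip: of_int_minus)
next
  case False
  have "c \<noteq> of_int \<lfloor>c\<rfloor>" using False Ints_of_int by metis
  then have "\<lfloor>- c\<rfloor> = - \<lfloor>c\<rfloor> - 1" by (simp add: floor_minus ceiling_altdef)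
  moreover have "half_round_frac th (1 - frac c) = 1 - half_round_frac th (frac c)"
    using assms frac_lt_1[of c] False by (auto simp: half_round_frac_def)
  ultimately show ?thesis using False by (simp add: half_round_def frac_neg)
qed

lemma mono_half_round: "mono (half_round th)"
proof (rule monoI)
  fix a b :: real assume "a \<le> b"
  show "half_round th a \<le> half_round th b"
  proof (cases "\<lfloor>a\<rfloor> = \<lfloor>b\<rfloor>")
    case True
    with \<open>a \<le> b\<close> have "frac a \<le> frac b" by (simp add: frac_def)
    with True show ?thesis by (simp add: half_round_def half_round_frac_def)
  next
    case False
    with \<open>a \<le> b\<close> have "\<lfloor>a\<rfloor> + 1 \<le> \<lfloor>b\<rfloor>" using floor_mono[of a b] by linarith
    then show ?thesis by (simp add: half_round_def half_round_frac_def)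
  qed
qed

lemma half_round_half_integral: "2 * half_round th c \<in> \<int>"
  by (simp add: half_round_def half_round_frac_def distrib_left)

lemma abs_of_int_diff_half_round:
  assumes "0 < th" "th \<le> 1/2"
  shows "\<bar>of_int n - half_round th c\<bar> = half_round th \<bar>of_int n - c\<bar>"
proof (cases "c \<le> of_int n")
  case True
  have "half_round th c \<le> of_int n"
    using monoD[OF mono_half_round[of th] True] half_round_of_int[OF assms(1)] by simp
  moreover have "half_round th (of_int n - c) = of_int n - half_round th c"
    using half_round_add_of_int[of th "- c" n] half_round_uminus[OF assms] by simp
  ultimately show ?thesis using True by simp
next
  case False
  have "of_int n \<le> half_round th c"
    using monoD[OF mono_half_round[of th], of "of_int n" c] half_round_of_int[OF assms(1)] False by simp
  moreover have "half_round th (c - of_int n) = half_round th c - of_int n"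
    using half_round_add_of_int[of th c "- n"] by simp
  ultimately show ?thesis using False by simp
qed

lemma sum_gap_below_half_round_frac_error:
  assumes T: "finite T" "T \<subseteq> {0<..1/2}" "1/2 \<in> T"
    and f: "0 \<le> f" "f < 1" "min f (1 - f) \<in> insert 0 T"
  shows "(\<Sum>t\<in>T. gap_below T t * (half_round_frac t f - f)) = 0"
proof -
  define u where "u = min f (1 - f)"
  define \<sigma> :: real where "\<sigma> = (if f \<le> 1/2 then 1 else -1)"
  have T_pos: "T \<subseteq> {0<..}" using T(2) by auto
  have error: "half_round_frac t f - f = \<sigma> * ((if t \<le> u then 1/2 else 0) - u)" if "t \<in> T" for t
    using that T(2) f(1,2) by (auto simp: half_round_frac_def \<sigma>_def u_def)
  have "{t\<in>T. t \<le> 1/2} = T" using T(2) by auto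
  then have total: "(\<Sum>t\<in>T. gap_below T t) = 1/2"
    using sum_gap_below_atMost[OF T(1) T_pos, of "1/2"] T(3) by simp
  have below_u: "(\<Sum>t\<in>T. if t \<le> u then gap_below T t else 0) = u"
    using sum_gap_below_atMost[OF T(1) T_pos f(3)[folded u_def]] T(1)
    by (simp add: sum.inter_filter)
  have "(\<Sum>t\<in>T. gap_below T t * (half_round_frac t f - f))
      = (\<Sum>t\<in>T. \<sigma> * (1/2 * (if t \<le> u then gap_below T t else 0) - u * gap_below T t))"
    by (intro sum.cong) (simp_all add: error algebra_simps)
  also have "\<dots> = \<sigma> * (1/2 * (\<Sum>t\<in>T. if t \<le> u then gap_below T t else 0) - u * (\<Sum>t\<in>T. gap_below T t))"
    by (simp only: sum_distrib_left[symmetric] sum_subtractf)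
  finally show ?thesis using total below_u by simp
qed

lemma ex_threshold_sum_half_round_le:
  fixes M :: "real multiset"
  shows "\<exists>th. 0 < th \<and> th \<le> 1/2 \<and> (\<Sum>d\<in>#M. half_round th d) \<le> sum_mset M"
proof -
  define T where "T = insert (1/2) ((\<lambda>d. min (frac d) (1 - frac d)) ` set_mset M \<inter> {0<..})"
  define err where "err th = (\<Sum>d\<in>#M. half_round_frac th (frac d) - frac d)" for th
  have T: "finite T" "T \<subseteq> {0<..1/2}" "1/2 \<in> T"
    using frac_lt_1 by (auto simp: T_def min_def)
  have T_pos: "T \<subseteq> {0<..}" using T(2) by auto
  have "(\<Sum>t\<in>T. gap_below T t * err t) = (\<Sum>d\<in>#M. \<Sum>t\<in>T. gap_below T t * (half_round_frac t (frac d) - frac d))"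
    unfolding err_def by (induction M) (simp_all add: distrib_left sum.distrib)
  also have "\<dots> = 0"
  proof (rule sum_mset.neutral, intro ballI)
    fix x assume "x \<in># image_mset (\<lambda>d. \<Sum>t\<in>T. gap_below T t * (half_round_frac t (frac d) - frac d)) M"
    then obtain d where "d \<in># M" and x: "x = (\<Sum>t\<in>T. gap_below T t * (half_round_frac t (frac d) - frac d))"
      by auto
    then have "min (frac d) (1 - frac d) \<in> insert 0 T"
      using frac_ge_0[of d] frac_lt_1[of d] by (auto simp: T_def min_def)
    then show "x = 0" unfolding x
      using sum_gap_below_half_round_frac_error[OF T] frac_ge_0 frac_lt_1 by blast
  qed
  finally have weighted: "(\<Sum>t\<in>T. gap_below T t * err t) = 0" .
  obtain th where th: "th \<in> T" "err th \<le> 0"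
  proof (rule ccontr)
    assume "\<not> thesis"
    then have "\<forall>t\<in>T. 0 < gap_below T t * err t"
      using that gap_below_pos[OF T(1)] T_pos by (force intro: mult_pos_pos)
    then have "0 < (\<Sum>t\<in>T. gap_below T t * err t)" using T(1,3) by (intro sum_pos) auto
    then show False using weighted by simp
  qed
  have "(\<Sum>d\<in>#M. half_round th d) - sum_mset M = err th"
    unfolding err_def half_round_def frac_def by (induction M) simp_all
  then show ?thesis using th T(2) by (intro exI[of _ th]) auto
qed

lemma dist_inf_half_round:
  assumes "0 < th" "th \<le> 1/2"
  shows "dist_inf (int_vec x) (\<chi> i. half_round th (c $ i)) = half_round th (dist_inf (int_vec x) c)"
proof -
  have "range (\<lambda>i. \<bar>int_vec x $ i - (\<chi> i. half_round th (c $ i)) $ i\<bar>)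
      = half_round th ` range (\<lambda>i. \<bar>int_vec x $ i - c $ i\<bar>)"
    using abs_of_int_diff_half_round[OF assms] by (auto simp: int_vec_def image_comp)
  then show ?thesis unfolding dist_inf_def by (simp add: mono_Max_commute[OF mono_half_round])
qed

lemma ex_half_integral_inf_cost_le:
  "\<exists>c'. (\<forall>i. 2 * c' $ i \<in> \<int>) \<and> inf_cost C c' \<le> inf_cost C c"
proof -
  obtain th where th: "0 < th" "th \<le> 1/2"
    and le: "(\<Sum>x\<in>#C. half_round th (dist_inf (int_vec x) c)) \<le> (\<Sum>x\<in>#C. dist_inf (int_vec x) c)"
    using ex_threshold_sum_half_round_le[of "image_mset (\<lambda>x. dist_inf (int_vec x) c) C"]
    by (auto simp: image_mset.compositionality comp_def)
  define c' where "c' = (\<chi> i. half_round th (c $ i))"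
  have "inf_cost C c' \<le> inf_cost C c"
    using le by (simp add: inf_cost_def c'_def dist_inf_half_round[OF th])
  moreover have "\<forall>i. 2 * c' $ i \<in> \<int>" by (simp add: c'_def half_round_half_integral)
  ultimately show ?thesis by blast
qed

lemma dist_inf_nonneg: "0 \<le> dist_inf x y"
  unfolding dist_inf_def by (rule order_trans[OF abs_ge_zero Max_ge]) auto

lemma half_integral_dist_inf:
  assumes "\<forall>i. 2 * c $ i \<in> \<int>"
  shows "2 * dist_inf (int_vec x) c \<in> \<int>"
proof -
  have "dist_inf (int_vec x) c \<in> range (\<lambda>i. \<bar>int_vec x $ i - c $ i\<bar>)"
    unfolding dist_inf_def by (rule Max_in) auto
  then obtain i where i: "dist_inf (int_vec x) c = \<bar>of_int (x $ i) - c $ i\<bar>"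
    by (auto simp: int_vec_def)
  have "2 * \<bar>of_int (x $ i) - c $ i\<bar> = \<bar>of_int (2 * x $ i) - 2 * c $ i\<bar>"
    by (simp add: abs_if)
  also have "\<dots> \<in> \<int>" using assms by (intro Ints_abs Ints_diff) auto
  finally show ?thesis using i by simp
qed

lemma half_integral_inf_cost:
  assumes "\<forall>i. 2 * c $ i \<in> \<int>"
  shows "2 * inf_cost C c \<in> \<nat>"
proof -
  have "2 * inf_cost C c \<in> \<int>"
    unfolding inf_cost_def
    by (induction C) (simp_all add: distrib_left half_integral_dist_inf[OF assms])
  moreover have "0 \<le> inf_cost C c" unfolding inf_cost_def by (induction C) (simp_all add: dist_inf_nonneg)
  ultimately show ?thesis by (auto simp: Nats_altdef1 elim!: Ints_cases)
qed

theorem claim8: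
  fixes C :: "(int^'d) multiset"
  shows "\<exists>c :: real^'d. (\<forall>i. 2 * c $ i \<in> \<int>) \<and> (\<forall>c'. inf_cost C c \<le> inf_cost C c')"
proof -
  define half_integral :: "real^'d \<Rightarrow> bool" where "half_integral c \<longleftrightarrow> (\<forall>i. 2 * c $ i \<in> \<int>)" for c
  define doubled_cost where "doubled_cost c = nat \<lfloor>2 * inf_cost C c\<rfloor>" for c
  have cost: "2 * inf_cost C c = of_nat (doubled_cost c)" if "half_integral c" for c
    using half_integral_inf_cost[of c C] that by (auto simp: half_integral_def doubled_cost_def elim!: Nats_cases)
  have "half_integral 0" by (simp add: half_integral_def)
  then obtain c where c: "half_integral c"
    and least: "\<And>c'. half_integral c' \<Longrightarrow> doubled_cost c \<le> doubled_cost c'"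
    using ex_has_least_nat[of half_integral] by blast
  have "inf_cost C c \<le> inf_cost C c'" for c'
  proof -
    obtain c'' where c'': "half_integral c''" "inf_cost C c'' \<le> inf_cost C c'"
      using ex_half_integral_inf_cost_le unfolding half_integral_def by blast
    have "2 * inf_cost C c \<le> 2 * inf_cost C c''"
      unfolding cost[OF c] cost[OF c''(1)] using least[OF c''(1)] by simp
    then show ?thesis using c''(2) by simp
  qed
  then show ?thesis using c unfolding half_integral_def by blast
qed

end
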